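(* Let $n\ge1$ and let $\lambda$ be a partition with $\ell(\lambda)\le n$. Then \[ \mathrm{sp}^{(n-1,1)}_{\lambda}(x_1,\dots,x_{n-1}\mid x_n)=\mathrm{spo}_{\lambda}\left(x_1,\dots,x_{n-1},x_n^{-1};\,-x_n^{-1}\right). \]
   Context: An $(n-1,1)$-symplectic tableau of shape $\lambda$ is a filling of the Young diagram of $\lambda$ with entries from $1<\bar1<2<\bar2<\cdots<n-1<\overline{n-1}<n$ such that entries weakly increase along rows, strictly increase down columns, and the entries of row $i$ are $\ge i$. Its weight is $x_n^{\#n}\prod_{i=1}^{n-1}x_i^{\#i-\#\bar i}$. The odd symplectic character $\mathrm{sp}^{(n-1,1)}_\lambda(x_1,\dots,x_{n-1}\mid x_n)$ is the sum of weights of all such tableaux. Orthosymplectic Schur function $\mathrm{spo}_\lambda(X;Y)$ for $X=(x_1,\dots,x_n)$, $Y=(y_1,\dots,y_m)$ (here $m=1$): order $1<\bar1<\cdots<n<\bar n<1'<\cdots<m'$; an orthosymplectic tableau of shape $\lambda$ is a filling such that the entries from $\{1,\bar1,\dots,n,\bar n\}$ form a symplectic tableau (weakly increasing along rows, strictly increasing down columns, entries in row $i$ are $\ge i$) and the remaining primed entries form a skew filling strictly increasing along rows and weakly increasing down columns; weight $\prod_i x_i^{\#i-\#\bar i}\prod_j y_j^{\#j'}$; $\mathrm{spo}_\lambda$ is the sum of weights. *)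

theory Defs
  imports Main
begin

definition is_partition :: "nat list \<Rightarrow> bool" where
  "is_partition lam \<longleftrightarrow> sorted (rev lam) \<and> 0 \<notin> set lam"

text \<open>Young diagram, 0-indexed cells (row, column).\<close>
definition diagram :: "nat list \<Rightarrow> (nat \<times> nat) set" where
  "diagram lam = {(i, j). i < length lam \<and> j < lam ! i}"

text \<open>Encoding of letters by positive naturals respecting the order:
  the unbarred letter k is coded 2k-1, the barred letter k-bar is coded 2k.
  In the orthosymplectic alphabet with n unprimed indices the primed letter j'
  is coded 2n+j.\<close>

definition cnt :: "(nat \<times> nat \<Rightarrow> nat) \<Rightarrow> nat list \<Rightarrow> nat \<Rightarrow> nat" where
  "cnt T lam a = card {c \<in> diagram lam. T c = a}"

text \<open>(n-1,1)-symplectic tableaux of shape lam: alphabet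
  1 < 1bar < ... < n-1 < (n-1)bar < n, i.e. codes 1 .. 2n-1.
  Row i (1-indexed) entries are >= the letter i (code 2i-1); with 0-indexed
  row r this is code >= 2r+1.\<close>
definition odd_sp_tableaux :: "nat \<Rightarrow> nat list \<Rightarrow> (nat \<times> nat \<Rightarrow> nat) set" where
  "odd_sp_tableaux n lam = {T.
     (\<forall>c. c \<notin> diagram lam \<longrightarrow> T c = 0) \<and>
     (\<forall>c\<in>diagram lam. 1 \<le> T c \<and> T c \<le> 2 * n - 1) \<and>
     (\<forall>i j. (i, Suc j) \<in> diagram lam \<longrightarrow> T (i, j) \<le> T (i, Suc j)) \<and>
     (\<forall>i j. (Suc i, j) \<in> diagram lam \<longrightarrow> T (i, j) < T (Suc i, j)) \<and>
     (\<forall>i j. (i, j) \<in> diagram lam \<longrightarrow> 2 * i + 1 \<le> T (i, j))}"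

definition odd_sp_weight :: "nat \<Rightarrow> nat list \<Rightarrow> (nat \<Rightarrow> 'a::field) \<Rightarrow> (nat \<times> nat \<Rightarrow> nat) \<Rightarrow> 'a" where
  "odd_sp_weight n lam x T =
     x n ^ cnt T lam (2 * n - 1) *
     (\<Prod>i\<in>{1..<n}. x i powi (int (cnt T lam (2 * i - 1)) - int (cnt T lam (2 * i))))"

definition odd_sp :: "nat \<Rightarrow> nat list \<Rightarrow> (nat \<Rightarrow> 'a::field) \<Rightarrow> 'a" where
  "odd_sp n lam x = (\<Sum>T\<in>odd_sp_tableaux n lam. odd_sp_weight n lam x T)"

text \<open>Orthosymplectic tableaux for X = (x_1..x_n), Y = (y_1..y_m): codes 1..2n are
  the symplectic letters 1 < 1bar < ... < n < nbar, codes 2n+1..2n+m are 1' < ... < m'.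
  The unprimed entries form a symplectic tableau of a shape mu contained in lam
  and the primed entries fill lam/mu, strictly increasing along rows and weakly
  down columns.  This is expressed as: all entries weakly increase along rows and
  down columns (which forces the unprimed cells to form a Young diagram mu and the
  primed cells the skew shape lam/mu), unprimed entries strictly increase down
  columns and satisfy the row condition, primed entries strictly increase along rows.\<close>
definition spo_tableaux :: "nat \<Rightarrow> nat \<Rightarrow> nat list \<Rightarrow> (nat \<times> nat \<Rightarrow> nat) set" where
  "spo_tableaux n m lam = {T.
     (\<forall>c. c \<notin> diagram lam \<longrightarrow> T c = 0) \<and>
     (\<forall>c\<in>diagram lam. 1 \<le> T c \<and> T c \<le> 2 * n + m) \<and>
     (\<forall>i j. (i, Suc j) \<in> diagram lam \<longrightarrow> T (i, j) \<le> T (i, Suc j)) \<and>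
     (\<forall>i j. (Suc i, j) \<in> diagram lam \<longrightarrow> T (i, j) \<le> T (Suc i, j)) \<and>
     (\<forall>i j. (Suc i, j) \<in> diagram lam \<longrightarrow> T (Suc i, j) \<le> 2 * n \<longrightarrow> T (i, j) < T (Suc i, j)) \<and>
     (\<forall>i j. (i, j) \<in> diagram lam \<longrightarrow> T (i, j) \<le> 2 * n \<longrightarrow> 2 * i + 1 \<le> T (i, j)) \<and>
     (\<forall>i j. (i, Suc j) \<in> diagram lam \<longrightarrow> 2 * n < T (i, j) \<longrightarrow> T (i, j) < T (i, Suc j))}"

definition spo_weight :: "nat \<Rightarrow> nat \<Rightarrow> nat list \<Rightarrow> (nat \<Rightarrow> 'a::field) \<Rightarrow> (nat \<Rightarrow> 'a) \<Rightarrow> (nat \<times> nat \<Rightarrow> nat) \<Rightarrow> 'a" where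
  "spo_weight n m lam x y T =
     (\<Prod>i\<in>{1..n}. x i powi (int (cnt T lam (2 * i - 1)) - int (cnt T lam (2 * i)))) *
     (\<Prod>j\<in>{1..m}. y j ^ cnt T lam (2 * n + j))"

definition spo :: "nat \<Rightarrow> nat \<Rightarrow> nat list \<Rightarrow> (nat \<Rightarrow> 'a::field) \<Rightarrow> (nat \<Rightarrow> 'a) \<Rightarrow> 'a" where
  "spo n m lam x y = (\<Sum>T\<in>spo_tableaux n m lam. spo_weight n m lam x y T)"

end

theory Submission
  imports Defs "HOL-Library.Disjoint_Sets"
begin

text \<open>Write n, n-bar and 1' for the three largest letters.  A Bender--Knuth involution,
  which in each row exchanges the numbers of n's and n-bar's inside the segment left free by
  the column conditions, turns the specialised spo-weight (in which x_n is inverted) into a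
  weight in which x_n again counts n's minus n-bar's.  On the tableaux containing an n-bar
  or a 1', the last cell of the first row containing one holds n-bar or 1', and toggling it
  between these two letters is a sign-reversing involution because y = -1/x_n.  The
  remaining tableaux have all entries at most n: they are the (n-1,1)-symplectic tableaux,
  and their weight is the odd symplectic one.\<close>

lemma monotone_sublevel_set_is_lessThan:
  fixes f :: "nat \<Rightarrow> 'a::linorder"
  assumes "\<And>j j'. j \<le> j' \<Longrightarrow> j' < m \<Longrightarrow> f j \<le> f j'"
  shows "\<exists>q\<le>m. {j. j < m \<and> f j \<le> k} = {..<q}"
  using assms
proof (induction m)
  case 0 then show ?case by auto
next
  case (Suc m)
  have "\<And>j j'. j \<le> j' \<Longrightarrow> j' < m \<Longrightarrow> f j \<le> f j'" using Suc.prems by simp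
  then obtain q where q: "q \<le> m" "{j. j < m \<and> f j \<le> k} = {..<q}" using Suc.IH by blast
  show ?case
  proof (cases "f m \<le> k")
    case True
    have "f j \<le> k" if "j < Suc m" for j
      using Suc.prems[of j m] that True by (meson less_Suc_eq_le lessI order_trans)
    then have "{j. j < Suc m \<and> f j \<le> k} = {..<Suc m}" by auto
    then show ?thesis by blast
  next
    case False
    have "{j. j < Suc m \<and> f j \<le> k} = {j. j < m \<and> f j \<le> k}"
      using False by (auto simp: less_Suc_eq)
    then show ?thesis using q le_Suc_eq by blast
  qed
qed

lemma monotone_sublevel_set_eq_lessThan_card:
  fixes f :: "nat \<Rightarrow> 'a::linorder"
  assumes "\<And>j j'. j \<le> j' \<Longrightarrow> j' < m \<Longrightarrow> f j \<le> f j'"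
  shows "{j. j < m \<and> f j \<le> k} = {..<card {j. j < m \<and> f j \<le> k}}"
proof -
  obtain q where "{j. j < m \<and> f j \<le> k} = {..<q}"
    using monotone_sublevel_set_is_lessThan[of m f k, OF assms] by blast
  then show ?thesis by simp
qed

lemma sum_max_min_telescope:
  fixes a b :: "nat \<Rightarrow> nat"
  assumes "b m = 0"
  shows "(\<Sum>i<m. max (a i) (b (Suc i)) + (if i = 0 then b 0 else min (a (i - 1)) (b i)))
     = (\<Sum>i<m. a i + b i)"
proof -
  have "(\<Sum>i<Suc k. max (a i) (b (Suc i)) + (if i = 0 then b 0 else min (a (i - 1)) (b i)))
     + min (a k) (b (Suc k)) = (\<Sum>i<Suc k. a i + b i) + b (Suc k)" for k
  proof (induction k)
    case 0 then show ?case by (simp add: max_def min_def)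
  next
    case (Suc k)
    have "max (a (Suc k)) (b (Suc (Suc k))) + min (a (Suc k)) (b (Suc (Suc k)))
       = a (Suc k) + b (Suc (Suc k))" by (simp add: max_def min_def)
    then show ?case using Suc by (simp add: sum.lessThan_Suc)
  qed
  from this[of "m - 1"] assms show ?thesis by (cases m) simp_all
qed

definition row_len :: "nat list \<Rightarrow> nat \<Rightarrow> nat" where
  "row_len lam i = (if i < length lam then lam ! i else 0)"

lemma mem_diagram_iff: "(i, j) \<in> diagram lam \<longleftrightarrow> j < row_len lam i"
  by (auto simp: diagram_def row_len_def)

lemma row_len_antimono: "is_partition lam \<Longrightarrow> i \<le> i' \<Longrightarrow> row_len lam i' \<le> row_len lam i"
  by (auto simp: row_len_def is_partition_def intro: sorted_rev_nth_mono)

lemma finite_diagram: "finite (diagram lam)"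
proof -
  have "diagram lam = Sigma {..<length lam} (\<lambda>i. {..<lam ! i})"
    by (auto simp: diagram_def)
  then show ?thesis by auto
qed

lemma cnt_fun_upd:
  assumes z: "z \<in> diagram lam" and u: "T z = u" and v: "v \<noteq> u"
  shows "int (cnt (T(z := v)) lam u) = int (cnt T lam u) - 1"
    and "cnt (T(z := v)) lam v = cnt T lam v + 1"
    and "k \<noteq> u \<Longrightarrow> k \<noteq> v \<Longrightarrow> cnt (T(z := v)) lam k = cnt T lam k"
proof -
  let ?C = "\<lambda>k. {c \<in> diagram lam. T c = k}"
  have fin: "finite (?C k)" for k using finite_diagram by simp
  have z_u: "z \<in> ?C u" using z u by simp
  have "{c \<in> diagram lam. (T(z := v)) c = u} = ?C u - {z}" using v by auto
  moreover have "card (?C u - {z}) = card (?C u) - 1" by (rule card_Diff_singleton[OF z_u])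
  moreover have "0 < card (?C u)" using fin[of u] z_u card_gt_0_iff by blast
  ultimately show "int (cnt (T(z := v)) lam u) = int (cnt T lam u) - 1"
    unfolding cnt_def by (simp add: of_nat_diff)
  have "{c \<in> diagram lam. (T(z := v)) c = v} = insert z (?C v)" using z by auto
  moreover have "z \<notin> ?C v" using u v by simp
  ultimately show "cnt (T(z := v)) lam v = cnt T lam v + 1"
    unfolding cnt_def using fin by simp
  assume "k \<noteq> u" "k \<noteq> v"
  then have "{c \<in> diagram lam. (T(z := v)) c = k} = ?C k" using u by auto
  then show "cnt (T(z := v)) lam k = cnt T lam k" by (simp add: cnt_def)
qed

locale spo_shape =
  fixes n :: nat and lam :: "nat list"
  assumes rank_pos: "1 \<le> n" and partition: "is_partition lam" and length_le: "length lam \<le> n"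
begin

abbreviation "D \<equiv> diagram lam"
abbreviation "SP \<equiv> spo_tableaux n 1 lam"

text \<open>N codes the letter n; then Suc N codes n-bar and Suc (Suc N) the primed letter 1'.\<close>
abbreviation "N \<equiv> 2 * n - 1"

lemma N_eqs: "2 * n = Suc N" "1 \<le> N"
  using rank_pos by auto

lemma spo_tableauxD:
  assumes "T \<in> SP"
  shows spo_out: "(i, j) \<notin> D \<Longrightarrow> T (i, j) = 0"
    and spo_range: "(i, j) \<in> D \<Longrightarrow> 1 \<le> T (i, j) \<and> T (i, j) \<le> Suc (Suc N)"
    and spo_row: "(i, Suc j) \<in> D \<Longrightarrow> T (i, j) \<le> T (i, Suc j)"
    and spo_col: "(Suc i, j) \<in> D \<Longrightarrow> T (i, j) \<le> T (Suc i, j)"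
    and spo_col_strict: "(Suc i, j) \<in> D \<Longrightarrow> T (Suc i, j) \<le> Suc N \<Longrightarrow> T (i, j) < T (Suc i, j)"
    and spo_row_cond: "(i, j) \<in> D \<Longrightarrow> T (i, j) \<le> Suc N \<Longrightarrow> 2 * i + 1 \<le> T (i, j)"
    and spo_primed_row_strict: "(i, Suc j) \<in> D \<Longrightarrow> Suc N < T (i, j) \<Longrightarrow> T (i, j) < T (i, Suc j)"
  using assms rank_pos unfolding spo_tableaux_def by auto

lemma spo_tableauxI:
  assumes "\<And>c. c \<notin> D \<Longrightarrow> T c = 0"
    and "\<And>c. c \<in> D \<Longrightarrow> 1 \<le> T c \<and> T c \<le> Suc (Suc N)"
    and "\<And>i j. (i, Suc j) \<in> D \<Longrightarrow> T (i, j) \<le> T (i, Suc j)"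
    and "\<And>i j. (Suc i, j) \<in> D \<Longrightarrow> T (i, j) \<le> T (Suc i, j)"
    and "\<And>i j. (Suc i, j) \<in> D \<Longrightarrow> T (Suc i, j) \<le> Suc N \<Longrightarrow> T (i, j) < T (Suc i, j)"
    and "\<And>i j. (i, j) \<in> D \<Longrightarrow> T (i, j) \<le> Suc N \<Longrightarrow> 2 * i + 1 \<le> T (i, j)"
    and "\<And>i j. (i, Suc j) \<in> D \<Longrightarrow> Suc N < T (i, j) \<Longrightarrow> T (i, j) < T (i, Suc j)"
  shows "T \<in> SP"
  using assms rank_pos unfolding spo_tableaux_def by auto

lemma finite_spo_tableaux: "finite SP"
proof -
  let ?F = "{f. \<forall>c. (c \<in> D \<longrightarrow> f c \<in> {..Suc (Suc N)}) \<and> (c \<notin> D \<longrightarrow> f c = 0)}"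
  have "SP \<subseteq> ?F" using spo_out spo_range by fastforce
  moreover have "finite ?F"
    by (rule finite_set_of_finite_funs) (auto simp: finite_diagram)
  ultimately show ?thesis by (rule finite_subset)
qed

lemma diagram_left: "(i, Suc j) \<in> D \<Longrightarrow> (i, j) \<in> D"
  by (auto simp: mem_diagram_iff)

lemma diagram_up: "(Suc i, j) \<in> D \<Longrightarrow> (i, j) \<in> D"
  using row_len_antimono[OF partition, of i "Suc i"] by (auto simp: mem_diagram_iff)

lemma diagram_row_bound: "(i, j) \<in> D \<Longrightarrow> 2 * i + 1 \<le> N"
  using length_le by (auto simp: diagram_def)

lemma spo_row_mono:
  assumes "T \<in> SP" "j \<le> j'" "j' < row_len lam i"
  shows "T (i, j) \<le> T (i, j')"
  using assms(2,3)
proof (induction j' rule: dec_induct)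
  case base then show ?case by simp
next
  case (step k)
  then have "T (i, k) \<le> T (i, Suc k)" using spo_row[OF assms(1)] by (auto simp: mem_diagram_iff)
  with step show ?case by simp
qed

definition row_le_count :: "(nat \<times> nat \<Rightarrow> nat) \<Rightarrow> nat \<Rightarrow> nat \<Rightarrow> nat" where
  "row_le_count T k i = card {j. j < row_len lam i \<and> T (i, j) \<le> k}"

lemma row_le_count_iff:
  assumes "T \<in> SP" "j < row_len lam i"
  shows "T (i, j) \<le> k \<longleftrightarrow> j < row_le_count T k i"
proof -
  have "{j. j < row_len lam i \<and> T (i, j) \<le> k} = {..<row_le_count T k i}"
    unfolding row_le_count_def
    by (rule monotone_sublevel_set_eq_lessThan_card) (use spo_row_mono[OF assms(1)] in auto)
  then show ?thesis using assms(2) by blast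
qed

lemma row_le_count_le: "row_le_count T k i \<le> row_len lam i"
  unfolding row_le_count_def by (rule order_trans[OF card_mono[of "{..<row_len lam i}"]]) auto

lemma row_le_count_mono: "k \<le> k' \<Longrightarrow> row_le_count T k i \<le> row_le_count T k' i"
  unfolding row_le_count_def by (rule card_mono) auto

lemma cnt_eq_sum_row_le_count:
  assumes "1 \<le> k"
  shows "int (cnt T lam k) = (\<Sum>i<length lam. int (row_le_count T k i) - int (row_le_count T (k - 1) i))"
proof -
  let ?R = "\<lambda>k i. {j. j < row_len lam i \<and> T (i, j) \<le> k}"
  have "{c \<in> D. T c = k} = Sigma {..<length lam} (\<lambda>i. ?R k i - ?R (k - 1) i)"
    using assms by (auto simp: mem_diagram_iff row_len_def diagram_def)
  moreover have "card (?R k i - ?R (k - 1) i) = row_le_count T k i - row_le_count T (k - 1) i" for i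
    unfolding row_le_count_def by (rule card_Diff_subset) auto
  moreover have "row_le_count T (k - 1) i \<le> row_le_count T k i" for i
    by (rule row_le_count_mono) simp
  ultimately show ?thesis by (simp add: cnt_def of_nat_sum of_nat_diff)
qed

text \<open>Row i of a tableau has entries < n in columns [0, row_lt_n), n's in
  [row_lt_n, row_le_n) and n-bars in [row_le_n, row_le_nbar).  Column strictness forces an n
  above every n-bar of row i + 1 and an n-bar below every n of row i - 1, so only the segment
  [free_start, free_end) of row i can be refilled.  The Bender--Knuth map refills it with as
  many n's as it had n-bars, ending the n's at bk_boundary.\<close>

definition "row_lt_n T i = row_le_count T (N - 1) i"
definition "row_le_n T i = row_le_count T N i"
definition "row_le_nbar T i = row_le_count T (Suc N) i"
definition "free_start T i = max (row_lt_n T i) (row_le_nbar T (Suc i))"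
definition "free_end T i = (if i = 0 then row_le_nbar T 0 else min (row_lt_n T (i - 1)) (row_le_nbar T i))"

definition "bk_boundary T i = free_start T i + free_end T i - row_le_n T i"

definition bender_knuth :: "(nat \<times> nat \<Rightarrow> nat) \<Rightarrow> nat \<times> nat \<Rightarrow> nat" where
  "bender_knuth T = (\<lambda>(i, j). if (i, j) \<in> D \<and> N \<le> T (i, j) \<and> T (i, j) \<le> Suc N
     then (if j < bk_boundary T i then N else Suc N) else T (i, j))"

lemma entry_le_iff:
  assumes "T \<in> SP" and "(i, j) \<in> D"
  shows "T (i, j) \<le> N - 1 \<longleftrightarrow> j < row_lt_n T i"
    and "T (i, j) \<le> N \<longleftrightarrow> j < row_le_n T i"
    and "T (i, j) \<le> Suc N \<longleftrightarrow> j < row_le_nbar T i"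
  using row_le_count_iff[OF assms(1)] assms(2)
  by (auto simp: row_lt_n_def row_le_n_def row_le_nbar_def mem_diagram_iff)

lemma row_le_nbar_Suc_le_row_le_n:
  assumes T: "T \<in> SP" shows "row_le_nbar T (Suc i) \<le> row_le_n T i"
proof -
  have "j < row_le_n T i" if j: "j < row_le_nbar T (Suc i)" for j
  proof -
    have d: "(Suc i, j) \<in> D"
      using j row_le_count_le[of T "Suc N" "Suc i"] by (auto simp: row_le_nbar_def mem_diagram_iff)
    then have "T (Suc i, j) \<le> Suc N" using entry_le_iff(3)[OF T d] j by simp
    then have "T (i, j) \<le> N" using spo_col_strict[OF T d] by simp
    then show ?thesis using entry_le_iff(2)[OF T diagram_up[OF d]] by simp
  qed
  then show ?thesis by (meson leI less_irrefl)
qed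

lemma row_le_n_Suc_le_row_lt_n:
  assumes T: "T \<in> SP" shows "row_le_n T (Suc i) \<le> row_lt_n T i"
proof -
  have "j < row_lt_n T i" if j: "j < row_le_n T (Suc i)" for j
  proof -
    have d: "(Suc i, j) \<in> D"
      using j row_le_count_le[of T N "Suc i"] by (auto simp: row_le_n_def mem_diagram_iff)
    then have "T (Suc i, j) \<le> N" using entry_le_iff(2)[OF T d] j by simp
    then have "T (i, j) \<le> N - 1" using spo_col_strict[OF T d] by simp
    then show ?thesis using entry_le_iff(1)[OF T diagram_up[OF d]] by simp
  qed
  then show ?thesis by (meson leI less_irrefl)
qed

lemma free_segment_bounds:
  assumes T: "T \<in> SP"
  shows "row_lt_n T i \<le> free_start T i" "free_start T i \<le> row_le_n T i"
    "row_le_n T i \<le> free_end T i" "free_end T i \<le> row_le_nbar T i"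
    "free_start T i \<le> bk_boundary T i" "bk_boundary T i \<le> free_end T i"
proof -
  have lt_le: "row_lt_n T i \<le> row_le_n T i"
    unfolding row_lt_n_def row_le_n_def by (rule row_le_count_mono) simp
  have le_le: "row_le_n T i \<le> row_le_nbar T i"
    unfolding row_le_nbar_def row_le_n_def by (rule row_le_count_mono) simp
  show start_le: "free_start T i \<le> row_le_n T i"
    using lt_le row_le_nbar_Suc_le_row_le_n[OF T, of i] by (simp add: free_start_def)
  show le_end: "row_le_n T i \<le> free_end T i"
    using le_le row_le_n_Suc_le_row_lt_n[OF T, of "i - 1"] by (cases i) (simp_all add: free_end_def)
  show "row_lt_n T i \<le> free_start T i" by (simp add: free_start_def)
  show "free_end T i \<le> row_le_nbar T i" by (simp add: free_end_def)
  show "free_start T i \<le> bk_boundary T i" "bk_boundary T i \<le> free_end T i"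
    using start_le le_end by (auto simp: bk_boundary_def)
qed

lemma bender_knuth_in_spo_tableaux:
  assumes T: "T \<in> SP" shows "bender_knuth T \<in> SP"
proof (rule spo_tableauxI)
  fix c assume "c \<notin> D" then show "bender_knuth T c = 0"
    using spo_out[OF T] by (cases c) (auto simp: bender_knuth_def)
next
  fix c assume "c \<in> D" then show "1 \<le> bender_knuth T c \<and> bender_knuth T c \<le> Suc (Suc N)"
    using spo_range[OF T] N_eqs(2) by (cases c) (auto simp: bender_knuth_def)
next
  fix i j assume d: "(i, Suc j) \<in> D"
  then show "bender_knuth T (i, j) \<le> bender_knuth T (i, Suc j)"
    using spo_row[OF T d] diagram_left[OF d] by (auto simp: bender_knuth_def)
next
  fix i j assume d: "(Suc i, j) \<in> D"
  have d0: "(i, j) \<in> D" using diagram_up[OF d] .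
  have le: "T (i, j) \<le> T (Suc i, j)" using spo_col[OF T d] .
  have lt: "T (Suc i, j) \<le> Suc N \<Longrightarrow> T (i, j) < T (Suc i, j)" using spo_col_strict[OF T d] .
  have "bender_knuth T (i, j) < bender_knuth T (Suc i, j)"
    if "N \<le> T (i, j)" "T (i, j) \<le> Suc N" "N \<le> T (Suc i, j)" "T (Suc i, j) \<le> Suc N"
  proof -
    have x: "T (i, j) = N" and y: "T (Suc i, j) = Suc N" using that lt by auto
    have "\<not> j < row_lt_n T i" using entry_le_iff(1)[OF T d0] x N_eqs(2) by auto
    moreover have "j < row_le_nbar T (Suc i)" using entry_le_iff(3)[OF T d] y by simp
    ultimately have "j < bk_boundary T i" "\<not> j < bk_boundary T (Suc i)"
      using free_segment_bounds(5)[OF T, of i] free_segment_bounds(6)[OF T, of "Suc i"]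
      by (auto simp: free_start_def free_end_def)
    then show ?thesis using that d d0 by (auto simp: bender_knuth_def)
  qed
  then have "bender_knuth T (i, j) \<le> bender_knuth T (Suc i, j) \<and>
      (bender_knuth T (Suc i, j) \<le> Suc N \<longrightarrow> bender_knuth T (i, j) < bender_knuth T (Suc i, j))"
    using le lt d d0 by (auto simp: bender_knuth_def)
  then show "bender_knuth T (i, j) \<le> bender_knuth T (Suc i, j)"
    and "bender_knuth T (Suc i, j) \<le> Suc N \<Longrightarrow> bender_knuth T (i, j) < bender_knuth T (Suc i, j)"
    by blast+
next
  fix i j assume d: "(i, j) \<in> D" "bender_knuth T (i, j) \<le> Suc N"
  then show "2 * i + 1 \<le> bender_knuth T (i, j)"
    using spo_row_cond[OF T d(1)] diagram_row_bound[OF d(1)]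
    by (auto simp: bender_knuth_def split: if_splits)
next
  fix i j assume d: "(i, Suc j) \<in> D" "Suc N < bender_knuth T (i, j)"
  have d0: "(i, j) \<in> D" using diagram_left[OF d(1)] .
  have "Suc N < T (i, j)" using d(2) d0 by (auto simp: bender_knuth_def split: if_splits)
  then show "bender_knuth T (i, j) < bender_knuth T (i, Suc j)"
    using spo_primed_row_strict[OF T d(1)] d d0 by (auto simp: bender_knuth_def)
qed

lemma row_le_count_bender_knuth:
  assumes "k = N - 1 \<or> k = Suc N"
  shows "row_le_count (bender_knuth T) k i = row_le_count T k i"
proof -
  have "{j. j < row_len lam i \<and> bender_knuth T (i, j) \<le> k} = {j. j < row_len lam i \<and> T (i, j) \<le> k}"
    using assms N_eqs(2) by (auto simp: bender_knuth_def mem_diagram_iff)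
  then show ?thesis by (simp add: row_le_count_def)
qed

lemma row_le_n_bender_knuth:
  assumes T: "T \<in> SP" shows "row_le_n (bender_knuth T) i = bk_boundary T i"
proof -
  have bounds: "row_lt_n T i \<le> bk_boundary T i" "bk_boundary T i \<le> row_le_nbar T i"
    "row_le_nbar T i \<le> row_len lam i"
    using free_segment_bounds[OF T, of i] row_le_count_le[of T "Suc N" i]
    by (auto simp: row_le_nbar_def)
  have "j < row_len lam i \<and> bender_knuth T (i, j) \<le> N \<longleftrightarrow> j < bk_boundary T i" for j
  proof (cases "j < row_len lam i")
    case True
    then have d: "(i, j) \<in> D" by (simp add: mem_diagram_iff)
    show ?thesis
    proof (cases "N \<le> T (i, j) \<and> T (i, j) \<le> Suc N")
      case True
      then show ?thesis using d \<open>j < row_len lam i\<close> by (auto simp: bender_knuth_def)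
    next
      case False
      then show ?thesis using d bounds entry_le_iff(1,3)[OF T d]
        by (auto simp: bender_knuth_def)
    qed
  next
    case False
    then show ?thesis using bounds by simp
  qed
  then have "{j. j < row_len lam i \<and> bender_knuth T (i, j) \<le> N} = {..<bk_boundary T i}"
    by blast
  then show ?thesis by (simp add: row_le_n_def row_le_count_def)
qed

lemma row_stats_bender_knuth:
  assumes T: "T \<in> SP"
  shows "row_lt_n (bender_knuth T) = row_lt_n T" "row_le_nbar (bender_knuth T) = row_le_nbar T"
    "row_le_n (bender_knuth T) = bk_boundary T"
  using row_le_count_bender_knuth row_le_n_bender_knuth[OF T]
  by (auto simp: row_lt_n_def row_le_nbar_def)

lemma bk_boundary_bender_knuth:
  assumes T: "T \<in> SP" shows "bk_boundary (bender_knuth T) = row_le_n T"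
proof
  fix i
  have "free_start (bender_knuth T) i = free_start T i" "free_end (bender_knuth T) i = free_end T i"
    using row_stats_bender_knuth[OF T] by (auto simp: free_start_def free_end_def)
  then show "bk_boundary (bender_knuth T) i = row_le_n T i"
    using row_stats_bender_knuth(3)[OF T] free_segment_bounds[OF T, of i]
    by (auto simp: bk_boundary_def)
qed

lemma bender_knuth_bender_knuth:
  assumes T: "T \<in> SP" shows "bender_knuth (bender_knuth T) = T"
proof
  fix c :: "nat \<times> nat"
  obtain i j where c: "c = (i, j)" by (cases c)
  show "bender_knuth (bender_knuth T) c = T c"
  proof (cases "(i, j) \<in> D \<and> N \<le> T (i, j) \<and> T (i, j) \<le> Suc N")
    case True
    have "bender_knuth (bender_knuth T) (i, j) = (if j < bk_boundary (bender_knuth T) i then N else Suc N)"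
      using True unfolding bender_knuth_def[of "bender_knuth T"] by (simp add: bender_knuth_def)
    also have "\<dots> = (if j < row_le_n T i then N else Suc N)"
      using bk_boundary_bender_knuth[OF T] by simp
    also have "\<dots> = T (i, j)" using True entry_le_iff(2)[OF T, of i j] by auto
    finally show ?thesis using c by simp
  next
    case False
    then show ?thesis using c by (auto simp: bender_knuth_def)
  qed
qed

lemma sum_bk_boundary:
  assumes T: "T \<in> SP"
  shows "(\<Sum>i<length lam. int (bk_boundary T i)) =
    (\<Sum>i<length lam. int (row_lt_n T i)) + (\<Sum>i<length lam. int (row_le_nbar T i))
      - (\<Sum>i<length lam. int (row_le_n T i))"
proof -
  txt \<open>free_start of row i and free_end of row i + 1 are the max and min of the same pair.\<close>
  have "row_le_nbar T (length lam) = 0" by (simp add: row_le_nbar_def row_le_count_def row_len_def)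
  then have "(\<Sum>i<length lam. free_start T i + free_end T i) = (\<Sum>i<length lam. row_lt_n T i + row_le_nbar T i)"
    unfolding free_start_def free_end_def by (rule sum_max_min_telescope)
  then have "(\<Sum>i<length lam. int (free_start T i) + int (free_end T i))
      = (\<Sum>i<length lam. int (row_lt_n T i) + int (row_le_nbar T i))"
    by (metis (no_types, lifting) of_nat_add of_nat_sum sum.cong)
  moreover have "int (bk_boundary T i) = int (free_start T i) + int (free_end T i) - int (row_le_n T i)" for i
    using free_segment_bounds[OF T, of i] by (simp add: bk_boundary_def of_nat_diff)
  ultimately show ?thesis by (simp add: sum_subtractf sum.distrib)
qed

lemma cnt_bender_knuth:
  assumes T: "T \<in> SP"
  shows "cnt (bender_knuth T) lam N = cnt T lam (Suc N)"
    and "cnt (bender_knuth T) lam (Suc N) = cnt T lam N"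
    and "k \<noteq> N \<Longrightarrow> k \<noteq> Suc N \<Longrightarrow> cnt (bender_knuth T) lam k = cnt T lam k"
proof -
  let ?S = "\<lambda>f. \<Sum>i<length lam. int (f i)"
  have cnt_N: "int (cnt U lam N) = ?S (row_le_n U) - ?S (row_lt_n U)" for U
    using cnt_eq_sum_row_le_count[OF N_eqs(2), of U]
    by (simp add: row_le_n_def row_lt_n_def sum_subtractf)
  have cnt_SN: "int (cnt U lam (Suc N)) = ?S (row_le_nbar U) - ?S (row_le_n U)" for U
    using cnt_eq_sum_row_le_count[of "Suc N" U]
    by (simp add: row_le_n_def row_le_nbar_def sum_subtractf)
  show "cnt (bender_knuth T) lam N = cnt T lam (Suc N)"
    using cnt_N[of "bender_knuth T"] cnt_SN[of T] sum_bk_boundary[OF T]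
    unfolding row_stats_bender_knuth[OF T] by simp
  show "cnt (bender_knuth T) lam (Suc N) = cnt T lam N"
    using cnt_SN[of "bender_knuth T"] cnt_N[of T] sum_bk_boundary[OF T]
    unfolding row_stats_bender_knuth[OF T] by simp
  assume "k \<noteq> N" "k \<noteq> Suc N"
  then have "{c \<in> D. bender_knuth T c = k} = {c \<in> D. T c = k}"
    by (auto simp: bender_knuth_def split: if_splits)
  then show "cnt (bender_knuth T) lam k = cnt T lam k" by (simp add: cnt_def)
qed

definition "has_high_entry T i \<longleftrightarrow> (\<exists>j. (i, j) \<in> D \<and> Suc N \<le> T (i, j))"
definition "first_high_row T = (LEAST i. has_high_entry T i)"
definition "toggle_cell T = (first_high_row T, row_len lam (first_high_row T) - 1)"
definition "toggle T = T(toggle_cell T := (if T (toggle_cell T) = Suc N then Suc (Suc N) else Suc N))"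
definition "high_tableaux = {T \<in> SP. \<exists>i. has_high_entry T i}"

lemma odd_sp_tableaux_eq: "odd_sp_tableaux n lam = SP - high_tableaux"
proof (intro set_eqI iffI)
  fix T assume T: "T \<in> odd_sp_tableaux n lam"
  have "T \<in> SP"
  proof (rule spo_tableauxI)
    fix i j assume "(i, Suc j) \<in> D" "Suc N < T (i, j)"
    then show "T (i, j) < T (i, Suc j)" using T diagram_left[of i j] by (fastforce simp: odd_sp_tableaux_def)
  qed (use T in \<open>fastforce simp: odd_sp_tableaux_def\<close>)+
  moreover have "\<not> has_high_entry T i" for i using T by (auto simp: odd_sp_tableaux_def has_high_entry_def)
  ultimately show "T \<in> SP - high_tableaux" by (simp add: high_tableaux_def)
next
  fix T assume "T \<in> SP - high_tableaux"
  then have T: "T \<in> SP" and le: "\<And>i j. (i, j) \<in> D \<Longrightarrow> T (i, j) \<le> N"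
    by (auto simp: high_tableaux_def has_high_entry_def not_le less_Suc_eq_le)
  show "T \<in> odd_sp_tableaux n lam"
    unfolding odd_sp_tableaux_def
  proof (intro CollectI conjI allI ballI impI)
    fix c assume "c \<notin> D" then show "T c = 0" using spo_out[OF T] by (cases c) auto
  next
    fix c assume "c \<in> D" then show "1 \<le> T c" "T c \<le> 2 * n - 1"
      using spo_range[OF T] le by (cases c; auto)+
  next
    fix i j assume "(i, Suc j) \<in> D" then show "T (i, j) \<le> T (i, Suc j)" using spo_row[OF T] by auto
  next
    fix i j assume d: "(Suc i, j) \<in> D"
    then show "T (i, j) < T (Suc i, j)" using spo_col_strict[OF T d] le[OF d] by auto
  next
    fix i j assume d: "(i, j) \<in> D"
    then show "2 * i + 1 \<le> T (i, j)" using spo_row_cond[OF T d] le[OF d] by auto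
  qed
qed

lemma high_tableauxD:
  assumes "T \<in> high_tableaux"
  shows "has_high_entry T (first_high_row T)"
    and "\<And>i. i < first_high_row T \<Longrightarrow> \<not> has_high_entry T i"
    and "toggle_cell T \<in> D"
    and "(fst (toggle_cell T), Suc (snd (toggle_cell T))) \<notin> D"
    and "T (toggle_cell T) = Suc N \<or> T (toggle_cell T) = Suc (Suc N)"
proof -
  have T: "T \<in> SP" and ex: "\<exists>i. has_high_entry T i" using assms by (auto simp: high_tableaux_def)
  show h: "has_high_entry T (first_high_row T)" unfolding first_high_row_def using ex by (rule LeastI_ex)
  show "\<And>i. i < first_high_row T \<Longrightarrow> \<not> has_high_entry T i"
    unfolding first_high_row_def using not_less_Least by blast
  from h obtain j where j: "(first_high_row T, j) \<in> D" "Suc N \<le> T (first_high_row T, j)"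
    by (auto simp: has_high_entry_def)
  show z: "toggle_cell T \<in> D" using j(1) by (auto simp: toggle_cell_def mem_diagram_iff)
  show "(fst (toggle_cell T), Suc (snd (toggle_cell T))) \<notin> D"
    using j(1) by (auto simp: toggle_cell_def mem_diagram_iff)
  have "T (first_high_row T, j) \<le> T (toggle_cell T)" unfolding toggle_cell_def
    by (rule spo_row_mono[OF T]) (use j(1) in \<open>auto simp: mem_diagram_iff\<close>)
  moreover have "T (toggle_cell T) \<le> Suc (Suc N)" using spo_range[OF T] z by (auto simp: toggle_cell_def)
  ultimately show "T (toggle_cell T) = Suc N \<or> T (toggle_cell T) = Suc (Suc N)" using j(2) by auto
qed

lemma has_high_entry_toggle:
  assumes "T \<in> high_tableaux" shows "has_high_entry (toggle T) = has_high_entry T"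
proof
  fix i
  have z: "toggle_cell T \<in> D" using high_tableauxD(3)[OF assms] .
  show "has_high_entry (toggle T) i = has_high_entry T i"
  proof (cases "i = first_high_row T")
    case True
    then show ?thesis using z high_tableauxD(1)[OF assms]
      unfolding has_high_entry_def toggle_def toggle_cell_def
      by (auto intro!: exI[of _ "row_len lam (first_high_row T) - 1"])
  next
    case False
    then show ?thesis unfolding has_high_entry_def toggle_def toggle_cell_def by auto
  qed
qed

lemma toggle_cell_toggle:
  assumes "T \<in> high_tableaux" shows "toggle_cell (toggle T) = toggle_cell T"
  using has_high_entry_toggle[OF assms] by (simp add: first_high_row_def toggle_cell_def)

lemma toggle_toggle:
  assumes "T \<in> high_tableaux" shows "toggle (toggle T) = T" and "toggle T \<noteq> T"
proof -
  have v: "T (toggle_cell T) = Suc N \<or> T (toggle_cell T) = Suc (Suc N)"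
    using high_tableauxD(5)[OF assms] .
  then have "(if toggle T (toggle_cell T) = Suc N then Suc (Suc N) else Suc N) = T (toggle_cell T)"
    by (auto simp: toggle_def)
  then show "toggle (toggle T) = T"
    unfolding toggle_def[of "toggle T"] toggle_cell_toggle[OF assms] by (simp add: toggle_def)
  show "toggle T \<noteq> T" using v by (metis fun_upd_same n_not_Suc_n toggle_def)
qed

lemma toggle_cell_neighbours:
  assumes X: "T \<in> high_tableaux" and z: "toggle_cell T = (r, m)"
  shows "\<And>i j. i < r \<Longrightarrow> (i, j) \<in> D \<Longrightarrow> T (i, j) \<le> N"
    and "Suc j = m \<Longrightarrow> T (r, j) \<le> Suc N"
    and "(Suc r, m) \<in> D \<Longrightarrow> T (Suc r, m) = Suc (Suc N)"
proof -
  have T: "T \<in> SP" using X by (simp add: high_tableaux_def)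
  have r: "r = first_high_row T" using z by (simp add: toggle_cell_def)
  have zD: "(r, m) \<in> D" using high_tableauxD(3)[OF X] z by simp
  have v: "T (r, m) = Suc N \<or> T (r, m) = Suc (Suc N)" using high_tableauxD(5)[OF X] z by simp
  show "\<And>i j. i < r \<Longrightarrow> (i, j) \<in> D \<Longrightarrow> T (i, j) \<le> N"
    using high_tableauxD(2)[OF X] unfolding has_high_entry_def r by (meson not_less_eq_eq)
  show "T (r, j) \<le> Suc N" if "Suc j = m"
  proof (rule ccontr)
    assume "\<not> T (r, j) \<le> Suc N"
    moreover have "(r, Suc j) \<in> D" using zD that by simp
    ultimately have "T (r, j) < T (r, Suc j)" using spo_primed_row_strict[OF T] by simp
    with \<open>\<not> T (r, j) \<le> Suc N\<close> v that show False by auto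
  qed
  show "T (Suc r, m) = Suc (Suc N)" if d: "(Suc r, m) \<in> D"
    using spo_col[OF T d] spo_range[OF T d] spo_col_strict[OF T d] v by linarith
qed

lemma toggle_in_high_tableaux:
  assumes X: "T \<in> high_tableaux" shows "toggle T \<in> high_tableaux"
proof -
  have T: "T \<in> SP" using X by (simp add: high_tableaux_def)
  obtain r m where z: "toggle_cell T = (r, m)" by fastforce
  note above = toggle_cell_neighbours(1)[OF X z] and left = toggle_cell_neighbours(2)[OF X z]
    and below = toggle_cell_neighbours(3)[OF X z]
  have zD: "(r, m) \<in> D" using high_tableauxD(3)[OF X] z by simp
  have no_right: "(r, Suc m) \<notin> D" using high_tableauxD(4)[OF X] by (simp add: z)
  have row_bound: "2 * r + 1 \<le> N" using diagram_row_bound[OF zD] .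
  have TG: "toggle T = T((r, m) := (if T (r, m) = Suc N then Suc (Suc N) else Suc N))"
    by (simp add: toggle_def z)
  have "toggle T \<in> SP"
  proof (rule spo_tableauxI)
    fix c assume "c \<notin> D" then show "toggle T c = 0"
      using spo_out[OF T] zD by (cases c) (auto simp: TG)
  next
    fix c assume "c \<in> D" then show "1 \<le> toggle T c \<and> toggle T c \<le> Suc (Suc N)"
      using spo_range[OF T] by (cases c) (auto simp: TG)
  next
    fix i j assume d: "(i, Suc j) \<in> D"
    show "toggle T (i, j) \<le> toggle T (i, Suc j)"
      using spo_row[OF T d] no_right left[of j] d by (auto simp: TG)
  next
    fix i j assume d: "(Suc i, j) \<in> D"
    have "toggle T (i, j) \<le> toggle T (Suc i, j) \<and>
      (toggle T (Suc i, j) \<le> Suc N \<longrightarrow> toggle T (i, j) < toggle T (Suc i, j))"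
    proof (cases "(Suc i, j) = (r, m)")
      case True
      then show ?thesis using above[of i j] diagram_up[OF d] by (auto simp: TG)
    next
      case False
      then show ?thesis using below d spo_col[OF T d] spo_col_strict[OF T d]
        by (cases "(i, j) = (r, m)") (auto simp: TG)
    qed
    then show "toggle T (i, j) \<le> toggle T (Suc i, j)"
      and "toggle T (Suc i, j) \<le> Suc N \<Longrightarrow> toggle T (i, j) < toggle T (Suc i, j)"
      by blast+
  next
    fix i j assume d: "(i, j) \<in> D" "toggle T (i, j) \<le> Suc N"
    then show "2 * i + 1 \<le> toggle T (i, j)" using spo_row_cond[OF T d(1)] row_bound
      by (cases "(i, j) = (r, m)") (auto simp: TG split: if_splits)
  next
    fix i j assume d: "(i, Suc j) \<in> D" "Suc N < toggle T (i, j)"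
    show "toggle T (i, j) < toggle T (i, Suc j)"
    proof (cases "(i, Suc j) = (r, m)")
      case True
      then show ?thesis using left[of j] d(2) by (auto simp: TG)
    next
      case False
      moreover have "(i, j) \<noteq> (r, m)" using no_right d(1) by auto
      ultimately show ?thesis using d spo_primed_row_strict[OF T d(1)] by (auto simp: TG)
    qed
  qed
  then show ?thesis using has_high_entry_toggle[OF X] X by (simp add: high_tableaux_def)
qed

definition lower_weight :: "(nat \<Rightarrow> 'a::field) \<Rightarrow> (nat \<times> nat \<Rightarrow> nat) \<Rightarrow> 'a" where
  "lower_weight x T = (\<Prod>i\<in>{1..<n}. x i powi (int (cnt T lam (2 * i - 1)) - int (cnt T lam (2 * i))))"

definition bk_weight :: "(nat \<Rightarrow> 'a::field) \<Rightarrow> (nat \<times> nat \<Rightarrow> nat) \<Rightarrow> 'a" where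
  "bk_weight x T = lower_weight x T * inverse (x n) powi (int (cnt T lam (Suc N)) - int (cnt T lam N))
     * (- inverse (x n)) ^ cnt T lam (Suc (Suc N))"

lemma lower_weight_cong:
  "(\<And>k. k < N \<Longrightarrow> cnt T' lam k = cnt T lam k) \<Longrightarrow> lower_weight x T' = lower_weight x T"
  unfolding lower_weight_def by (rule prod.cong) auto

lemma odd_sp_weight_eq: "odd_sp_weight n lam x T = x n ^ cnt T lam N * lower_weight x T"
  unfolding odd_sp_weight_def lower_weight_def ..

lemma spo_weight_specialized:
  "spo_weight n 1 lam (\<lambda>i. if i = n then inverse (x n) else x i) (\<lambda>j. - inverse (x n)) T =
   lower_weight x T * inverse (x n) powi (int (cnt T lam N) - int (cnt T lam (Suc N))) *
     (- inverse (x n)) ^ cnt T lam (Suc (Suc N))"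
proof -
  define f where "f i = (if i = n then inverse (x n) else x i) powi
          (int (cnt T lam (2 * i - 1)) - int (cnt T lam (2 * i)))" for i
  have cnt_top: "cnt T lam (2 * n) = cnt T lam (Suc N)"
    "cnt T lam (Suc (2 * n)) = cnt T lam (Suc (Suc N))"
    using N_eqs(1) by metis+
  have "{1..n} = insert n {1..<n}" using rank_pos by auto
  then have "prod f {1..n} = f n * prod f {1..<n}" by simp
  also have "prod f {1..<n} = lower_weight x T"
    unfolding lower_weight_def f_def by (rule prod.cong) auto
  also have "f n = inverse (x n) powi (int (cnt T lam N) - int (cnt T lam (Suc N)))"
    unfolding f_def cnt_top by simp
  finally have "prod f {1..n} = lower_weight x T *
      inverse (x n) powi (int (cnt T lam N) - int (cnt T lam (Suc N)))" by (simp only: mult.commute)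
  then show ?thesis unfolding spo_weight_def f_def[symmetric] by (simp add: cnt_top(2))
qed

lemma spo_weight_bender_knuth:
  assumes "T \<in> SP"
  shows "spo_weight n 1 lam (\<lambda>i. if i = n then inverse (x n) else x i) (\<lambda>j. - inverse (x n))
    (bender_knuth T) = bk_weight x T"
  using lower_weight_cong[of "bender_knuth T" T x] cnt_bender_knuth[OF assms]
  unfolding spo_weight_specialized bk_weight_def by simp

lemma spo_specialized_eq_sum_bk_weight:
  "spo n 1 lam (\<lambda>i. if i = n then inverse (x n) else x i) (\<lambda>j. - inverse (x n))
    = (\<Sum>T\<in>SP. bk_weight x T)"
proof -
  have "bij_betw bender_knuth SP SP"
    using bender_knuth_in_spo_tableaux bender_knuth_bender_knuth
    by (intro bij_betwI[of _ _ _ bender_knuth]) auto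
  then have "spo n 1 lam (\<lambda>i. if i = n then inverse (x n) else x i) (\<lambda>j. - inverse (x n))
    = (\<Sum>T\<in>SP. spo_weight n 1 lam (\<lambda>i. if i = n then inverse (x n) else x i) (\<lambda>j. - inverse (x n))
        (bender_knuth T))"
    unfolding spo_def by (rule sum.reindex_bij_betw[symmetric])
  also have "\<dots> = (\<Sum>T\<in>SP. bk_weight x T)" by (rule sum.cong[OF refl]) (rule spo_weight_bender_knuth)
  finally show ?thesis .
qed

lemma bk_weight_toggle:
  assumes x: "x n \<noteq> 0" and X: "T \<in> high_tableaux" and v: "T (toggle_cell T) = Suc N"
  shows "bk_weight x (toggle T) = - bk_weight x T"
proof -
  define e where "e = int (cnt T lam (Suc N)) - int (cnt T lam N)"
  define a where "a = cnt T lam (Suc (Suc N))"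
  have TG: "toggle T = T(toggle_cell T := Suc (Suc N))" using v by (simp add: toggle_def)
  note cnt_upd = cnt_fun_upd[where T = T and z = "toggle_cell T" and u = "Suc N" and v = "Suc (Suc N)",
    OF high_tableauxD(3)[OF X] v, folded TG]
  have "lower_weight x (toggle T) = lower_weight x T" by (rule lower_weight_cong) (simp add: cnt_upd(3))
  moreover have "int (cnt (toggle T) lam (Suc N)) - int (cnt (toggle T) lam N) = e - 1"
    using cnt_upd(1) cnt_upd(3)[of N] by (simp add: e_def)
  moreover have "cnt (toggle T) lam (Suc (Suc N)) = Suc a" using cnt_upd(2) by (simp add: a_def)
  ultimately have "bk_weight x (toggle T)
      = lower_weight x T * inverse (x n) powi (e - 1) * (- inverse (x n)) ^ Suc a"
    unfolding bk_weight_def by simp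
  also have "\<dots> = - (lower_weight x T * inverse (x n) powi e * (- inverse (x n)) ^ a)"
    using x by (simp add: power_int_diff field_simps)
  also have "\<dots> = - bk_weight x T" unfolding bk_weight_def e_def a_def ..
  finally show ?thesis .
qed

lemma sum_bk_weight_high_tableaux:
  assumes "x n \<noteq> 0" shows "(\<Sum>T\<in>high_tableaux. bk_weight x T) = 0"
proof (rule sum_involution_eq_0[where h = toggle])
  fix T assume X: "T \<in> high_tableaux"
  show "toggle T \<in> high_tableaux" "toggle (toggle T) = T" "toggle T \<noteq> T"
    using toggle_in_high_tableaux[OF X] toggle_toggle[OF X] by auto
  show "bk_weight x (toggle T) + bk_weight x T = 0"
  proof (cases "T (toggle_cell T) = Suc N")
    case True
    then show ?thesis using bk_weight_toggle[of x, OF assms X] by simp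
  next
    case False
    then have "toggle T (toggle_cell (toggle T)) = Suc N"
      unfolding toggle_cell_toggle[OF X] using high_tableauxD(5)[OF X] by (simp add: toggle_def)
    then show ?thesis
      using bk_weight_toggle[of x, OF assms toggle_in_high_tableaux[OF X]] toggle_toggle(1)[OF X] by simp
  qed
qed

lemma bk_weight_odd_sp:
  assumes "T \<in> odd_sp_tableaux n lam" shows "bk_weight x T = odd_sp_weight n lam x T"
proof -
  have none: "{c \<in> D. T c = Suc N} = {}" "{c \<in> D. T c = Suc (Suc N)} = {}"
    using assms by (fastforce simp: odd_sp_tableaux_def)+
  have "cnt T lam (Suc N) = 0" "cnt T lam (Suc (Suc N)) = 0"
    unfolding cnt_def none by simp_all
  then show ?thesis
    by (simp add: bk_weight_def odd_sp_weight_eq power_int_minus power_inverse mult.commute)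
qed

lemma odd_sp_eq_spo_specialized:
  assumes "x n \<noteq> 0"
  shows "odd_sp n lam x =
    spo n 1 lam (\<lambda>i. if i = n then inverse (x n) else x i) (\<lambda>j. - inverse (x n))"
proof -
  have "high_tableaux \<subseteq> SP" by (auto simp: high_tableaux_def)
  have "spo n 1 lam (\<lambda>i. if i = n then inverse (x n) else x i) (\<lambda>j. - inverse (x n))
      = (\<Sum>T\<in>SP. bk_weight x T)" by (rule spo_specialized_eq_sum_bk_weight)
  also have "\<dots> = (\<Sum>T\<in>SP - high_tableaux. bk_weight x T) + (\<Sum>T\<in>high_tableaux. bk_weight x T)"
    by (rule sum.subset_diff[OF \<open>high_tableaux \<subseteq> SP\<close> finite_spo_tableaux])
  also have "\<dots> = (\<Sum>T\<in>SP - high_tableaux. bk_weight x T)"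
    using sum_bk_weight_high_tableaux[of x, OF assms] by simp
  also have "\<dots> = odd_sp n lam x"
    unfolding odd_sp_def odd_sp_tableaux_eq[symmetric] by (rule sum.cong) (simp_all add: bk_weight_odd_sp)
  finally show ?thesis by (rule sym)
qed

end

theorem corollary2:
  fixes n :: nat and lam :: "nat list" and x :: "nat \<Rightarrow> 'a::field"
  assumes "1 \<le> n" and "is_partition lam" and "length lam \<le> n"
    and "\<forall>i\<in>{1..n}. x i \<noteq> 0"
  shows "odd_sp n lam x =
    spo n 1 lam (\<lambda>i. if i = n then inverse (x n) else x i) (\<lambda>j. - inverse (x n))"
proof -
  interpret spo_shape n lam using assms(1-3) by unfold_locales
  show ?thesis using assms(1,4) by (intro odd_sp_eq_spo_specialized) simp
qed

end
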